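(* Let $\mathcal{X},\mathcal{Y}$ be finite sets, $P_X$ a probability distribution on $\mathcal{X}$, $d:\mathcal{X}\times\mathcal{Y}\to[0,\infty)$ a distortion function, and $Q_Y$ a probability distribution on $\mathcal{Y}$. Let $R\ge 0$ be such that $e^R$ is an integer, and let $M=e^R+1$. Let $X\sim P_X$ and let $Y_0,\dots,Y_{M-1}$ be i.i.d. with law $Q_Y$, independent of $X$. Then $$\mathbb{E}\Big[\min_{0\le i\le M-1} d(X,Y_i)\Big]=\int_0^1 \tilde D(w,Q_Y)\,G_M'(w)\,dw,$$ where $G_M(w)=-(1-w)^{M-1}\big((M-1)w+1\big)$ and $\tilde D(w,Q_Y)$ is as defined in the context.
   Context: For $x\in\mathcal{X}$, $y\in\mathcal{Y}$, $u\in[0,1]$ let $p_{c,x,y,u}=Q_Y\{y': d(x,y')<d(x,y)\}+u\cdot Q_Y\{y': d(x,y')=d(x,y)\}$. For $w\in(0,1]$ define $$\tilde D(w,Q_Y)=w^{-1}\,\mathbb{E}\big[d(X,Y)\,\mathbf{1}\{p_{c,X,Y,U}\le w\}\big],$$ where $X\sim P_X$, $Y\sim Q_Y$ and $U$ uniform on $[0,1]$ are independent. *)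

theory Defs
  imports "HOL-Probability.Probability"
begin

definition p_c :: "('a \<Rightarrow> 'b \<Rightarrow> real) \<Rightarrow> 'b pmf \<Rightarrow> 'a \<Rightarrow> 'b \<Rightarrow> real \<Rightarrow> real" where
  "p_c d Q x y u = measure_pmf.prob Q {y'. d x y' < d x y}
                   + u * measure_pmf.prob Q {y'. d x y' = d x y}"

definition Dtilde :: "'a pmf \<Rightarrow> ('a \<Rightarrow> 'b \<Rightarrow> real) \<Rightarrow> real \<Rightarrow> 'b pmf \<Rightarrow> real" where
  "Dtilde P d w Q = (1 / w) *
     integral\<^sup>L (measure_pmf P \<Otimes>\<^sub>M (measure_pmf Q \<Otimes>\<^sub>M uniform_measure lborel {0..1::real}))
       (\<lambda>(x, y, u). d x y * (if p_c d Q x y u \<le> w then 1 else 0))"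

definition G :: "nat \<Rightarrow> real \<Rightarrow> real" where
  "G M w = - ((1 - w) ^ (M - 1)) * ((real M - 1) * w + 1)"

end

theory Submission
  imports Defs
begin

text \<open>Fix \<open>x\<close> and let \<open>a\<close>, \<open>q\<close> be the \<open>Q\<close>-probabilities that \<open>d x\<close> lies strictly
  below, resp. exactly at, the value \<open>v = d x y\<close>. The minimum of \<open>M\<close> i.i.d. copies of
  \<open>d x Y\<close> equals \<open>v\<close> with probability \<open>(1 - a)^M - (1 - a - q)^M\<close>; spreading this mass
  uniformly over the level set of \<open>v\<close> gives the weight \<open>((1 - a)^M - (1 - a - q)^M) / q\<close>
  per unit of \<open>Q\<close>-mass at \<open>y\<close>. On the other side \<open>p_c d Q x y U = a + q U\<close> is uniform on
  \<open>[a, a + q]\<close>, and the factor \<open>1/w\<close> of \<open>Dtilde\<close> cancels against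
  \<open>G_M'(w) = M (M - 1) w (1 - w)^(M - 2)\<close>. What remains is the integral of the ramp
  \<open>max 0 (min 1 ((w - a) / q))\<close> against \<open>F''\<close> for \<open>F w = (1 - w)^M\<close>, which integration by
  parts on the three pieces of the ramp evaluates to \<open>(F a - F (a + q)) / q\<close>: the same weight.\<close>

lemma has_integral_ramp_times_second_derivative:
  fixes F F' F'' :: "real \<Rightarrow> real" and a q :: real
  assumes F: "\<And>t. (F has_real_derivative F' t) (at t)"
    and F': "\<And>t. (F' has_real_derivative F'' t) (at t)"
    and q: "0 < q" and a: "0 \<le> a" and aq: "a + q \<le> 1"
  shows "((\<lambda>w. max 0 (min 1 ((w - a) / q)) * F'' w)
           has_integral F' 1 - (F (a + q) - F a) / q) {0..1}"
proof -
  let ?f = "\<lambda>w. max 0 (min 1 ((w - a) / q)) * F'' w"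
  define b where "b = a + q"
  define K where "K w = ((w - a) * F' w - F w) / q" for w
  have K: "(K has_real_derivative (w - a) / q * F'' w) (at w)" for w
    unfolding K_def using q by (auto intro!: derivative_eq_intros F F' simp: field_simps)
  have "(?f has_integral 0) {0..a}"
    by (rule has_integral_eq[OF _ has_integral_0]) (use q in \<open>auto simp: divide_le_0_iff\<close>)
  moreover have "(?f has_integral K b - K a) {a..b}"
  proof (rule has_integral_eq[OF _ fundamental_theorem_of_calculus])
    show "(w - a) / q * F'' w = ?f w" if "w \<in> {a..b}" for w
      using that q by (simp add: b_def)
    show "(K has_vector_derivative (w - a) / q * F'' w) (at w within {a..b})" for w
      using K has_real_derivative_iff_has_vector_derivative has_field_derivative_at_within by blast
  qed (use q in \<open>simp add: b_def\<close>)
  moreover have "(?f has_integral F' 1 - F' b) {b..1}"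
  proof (rule has_integral_eq[OF _ fundamental_theorem_of_calculus])
    show "F'' w = ?f w" if "w \<in> {b..1}" for w
      using that q by (simp add: b_def)
    show "(F' has_vector_derivative F'' w) (at w within {b..1})" for w
      using F' has_real_derivative_iff_has_vector_derivative has_field_derivative_at_within by blast
  qed (use aq in \<open>simp add: b_def\<close>)
  ultimately have "(?f has_integral 0 + (K b - K a) + (F' 1 - F' b)) {0..1}"
    using a q aq by (intro has_integral_combine) (auto simp: b_def)
  also have "0 + (K b - K a) + (F' 1 - F' b) = F' 1 - (F (a + q) - F a) / q"
    using q by (simp add: K_def b_def field_simps)
  finally show ?thesis .
qed

lemma has_integral_ramp_times_power:
  fixes a q :: real
  assumes q: "0 < q" and a: "0 \<le> a" and aq: "a + q \<le> 1"
  shows "((\<lambda>w. max 0 (min 1 ((w - a) / q)) * (real (n + 2) * real (n + 1) * (1 - w) ^ n))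
           has_integral ((1 - a) ^ (n + 2) - (1 - (a + q)) ^ (n + 2)) / q) {0..1}"
proof -
  have F: "((\<lambda>t. (1 - t) ^ (n + 2)) has_real_derivative - real (n + 2) * (1 - t) ^ (n + 1)) (at t)"
    for t :: real
    by (rule derivative_eq_intros refl)+ (simp add: algebra_simps)
  have F': "((\<lambda>t. - real (n + 2) * (1 - t) ^ (n + 1)) has_real_derivative
      real (n + 2) * real (n + 1) * (1 - t) ^ n) (at t)" for t :: real
    by (rule derivative_eq_intros refl)+ (simp add: algebra_simps)
  have "- real (n + 2) * (1 - 1) ^ (n + 1) - ((1 - (a + q)) ^ (n + 2) - (1 - a) ^ (n + 2)) / q
      = ((1 - a) ^ (n + 2) - (1 - (a + q)) ^ (n + 2)) / q"
    by (simp add: minus_divide_left)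
  then show ?thesis
    using has_integral_ramp_times_second_derivative[OF F F' q a aq] by simp
qed

lemma deriv_G: "deriv (G (n + 2)) w = real (n + 2) * real (n + 1) * w * (1 - w) ^ n"
proof (rule DERIV_imp_deriv)
  show "(G (n + 2) has_real_derivative real (n + 2) * real (n + 1) * w * (1 - w) ^ n) (at w)"
    unfolding G_def by (rule derivative_eq_intros refl)+ (simp add: algebra_simps)
qed

lemma integral_uniform_indicator_affine_le:
  fixes a q w :: real
  assumes "0 < q"
  shows "(\<integral>u. (if a + u * q \<le> w then 1 else 0) \<partial>uniform_measure lborel {0..1})
       = max 0 (min 1 ((w - a) / q))"
proof -
  have "(\<lambda>u. if a + u * q \<le> w then 1 else 0 :: real) = indicator {..(w - a) / q}"
    using assms by (auto simp: indicator_def fun_eq_iff field_simps)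
  then have "(\<integral>u. (if a + u * q \<le> w then 1 else 0) \<partial>uniform_measure lborel {0..1})
      = measure lborel ({0..1} \<inter> {..(w - a) / q})"
    by (simp add: measure_uniform_measure)
  also have "{0..1} \<inter> {..(w - a) / q} = {0..min 1 ((w - a) / q)}"
    by auto
  finally show ?thesis
    by (simp add: max_def)
qed

lemma prob_level_set_pos:
  assumes "pmf Q y \<noteq> 0"
  shows "0 < measure_pmf.prob Q {y'. f y' = f y}"
proof -
  have "pmf Q y \<le> measure_pmf.prob Q {y'. f y' = f y}"
    unfolding measure_pmf_single[symmetric] by (rule measure_pmf.finite_measure_mono) auto
  then show ?thesis
    using assms pmf_nonneg[of Q y] by linarith
qed

lemma prob_level_le_eq:
  fixes f :: "'b \<Rightarrow> 'c::linorder"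
  shows "measure_pmf.prob Q {y. f y \<le> v} = measure_pmf.prob Q {y. f y < v} + measure_pmf.prob Q {y. f y = v}"
  by (subst measure_pmf.finite_measure_Union[symmetric]) (auto intro: arg_cong[where f="measure_pmf.prob Q"])

lemma prob_Pi_pmf_Min_eq:
  fixes f :: "'b \<Rightarrow> 'c::linorder"
  assumes I: "finite I" "I \<noteq> {}"
  shows "measure_pmf.prob (Pi_pmf I dflt (\<lambda>_. Q)) {ys. Min ((\<lambda>i. f (ys i)) ` I) = v}
       = (1 - measure_pmf.prob Q {y. f y < v}) ^ card I - (1 - measure_pmf.prob Q {y. f y \<le> v}) ^ card I"
proof -
  let ?PP = "Pi_pmf I dflt (\<lambda>_. Q)"
  have Pi_const: "measure_pmf.prob ?PP (Pi I (\<lambda>_. S)) = measure_pmf.prob Q S ^ card I" for S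
    using I by (simp add: measure_Pi_pmf_Pi prod_constant)
  have compl: "measure_pmf.prob Q {y. v \<le> f y} = 1 - measure_pmf.prob Q {y. f y < v}"
       "measure_pmf.prob Q {y. v < f y} = 1 - measure_pmf.prob Q {y. f y \<le> v}"
    using measure_pmf.prob_compl[of "{y. f y < v}" Q] measure_pmf.prob_compl[of "{y. f y \<le> v}" Q]
    by (simp_all add: Compl_eq_Diff_UNIV[symmetric] Collect_neg_eq[symmetric] not_less not_le)
  have "Min ((\<lambda>i. f (ys i)) ` I) = v \<longleftrightarrow>
      (\<forall>i\<in>I. v \<le> f (ys i)) \<and> \<not> (\<forall>i\<in>I. v < f (ys i))" for ys
    using I by (auto simp: eq_iff[of _ v] Min_le_iff Min_ge_iff not_less)
  then have "{ys. Min ((\<lambda>i. f (ys i)) ` I) = v}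
      = Pi I (\<lambda>_. {y. v \<le> f y}) - Pi I (\<lambda>_. {y. v < f y})"
    by (auto simp: Pi_iff)
  moreover have "Pi I (\<lambda>_. {y. v < f y}) \<subseteq> Pi I (\<lambda>_. {y. v \<le> f y})"
    by (auto simp: Pi_iff less_imp_le)
  ultimately show ?thesis
    by (simp add: measure_pmf.finite_measure_Diff Pi_const compl)
qed

lemma expectation_Pi_pmf_Min:
  fixes Q :: "'b::finite pmf" and f :: "'b \<Rightarrow> real"
  assumes I: "finite I" "I \<noteq> {}"
  shows "measure_pmf.expectation (Pi_pmf I dflt (\<lambda>_. Q)) (\<lambda>ys. Min ((\<lambda>i. f (ys i)) ` I))
       = (\<Sum>v\<in>range f. v * ((1 - measure_pmf.prob Q {y. f y < v}) ^ card I
                              - (1 - measure_pmf.prob Q {y. f y \<le> v}) ^ card I))"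
proof -
  let ?PP = "Pi_pmf I dflt (\<lambda>_. Q)" and ?Min = "\<lambda>ys. Min ((\<lambda>i. f (ys i)) ` I)"
  have "measure_pmf.expectation ?PP ?Min = measure_pmf.expectation (map_pmf ?Min ?PP) (\<lambda>v. v)"
    by simp
  also have "\<dots> = (\<Sum>v\<in>range f. v * pmf (map_pmf ?Min ?PP) v)"
  proof (rule integral_measure_pmf_real)
    have "?Min ys \<in> (\<lambda>i. f (ys i)) ` I" for ys
      using I by (intro Min_in) auto
    then show "v \<in> range f" if "v \<in> set_pmf (map_pmf ?Min ?PP)" for v
      using that by auto
  qed simp
  also have "\<dots> = (\<Sum>v\<in>range f. v * measure_pmf.prob ?PP {ys. ?Min ys = v})"
    by (simp add: pmf_map vimage_def)
  finally show ?thesis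
    by (simp add: prob_Pi_pmf_Min_eq[OF I])
qed

lemma sum_range_eq_sum_pmf_level_sets:
  fixes Q :: "'b::finite pmf" and f :: "'b \<Rightarrow> 'c" and g :: "'c \<Rightarrow> real"
  assumes "\<And>v. measure_pmf.prob Q {y. f y = v} = 0 \<Longrightarrow> g v = 0"
  shows "(\<Sum>v\<in>range f. g v) = (\<Sum>y\<in>UNIV. pmf Q y * g (f y) / measure_pmf.prob Q {y'. f y' = f y})"
proof -
  have "(\<Sum>y\<in>UNIV. pmf Q y * g (f y) / measure_pmf.prob Q {y'. f y' = f y})
      = (\<Sum>v\<in>range f. \<Sum>y\<in>{y. f y = v}. pmf Q y * g v / measure_pmf.prob Q {y. f y = v})"
    by (subst sum.image_gen[where S=UNIV and g=f]) (auto intro!: sum.cong)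
  also have "\<dots> = (\<Sum>v\<in>range f. measure_pmf.prob Q {y. f y = v} * g v / measure_pmf.prob Q {y. f y = v})"
    by (simp add: measure_measure_pmf_finite sum_distrib_right sum_divide_distrib)
  also have "\<dots> = (\<Sum>v\<in>range f. g v)"
    using assms by (intro sum.cong) auto
  finally show ?thesis ..
qed

lemma expectation_Pi_pmf_Min_pointwise:
  fixes Q :: "'b::finite pmf" and f :: "'b \<Rightarrow> real"
  assumes I: "finite I" "I \<noteq> {}"
  defines "a y \<equiv> measure_pmf.prob Q {y'. f y' < f y}"
    and "q y \<equiv> measure_pmf.prob Q {y'. f y' = f y}"
  shows "measure_pmf.expectation (Pi_pmf I dflt (\<lambda>_. Q)) (\<lambda>ys. Min ((\<lambda>i. f (ys i)) ` I))
       = (\<Sum>y\<in>UNIV. pmf Q y * (f y * ((1 - a y) ^ card I - (1 - (a y + q y)) ^ card I) / q y))"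
  unfolding expectation_Pi_pmf_Min[OF I] prob_level_le_eq
  by (subst sum_range_eq_sum_pmf_level_sets[where Q=Q]) (auto simp: a_def q_def mult.assoc)

lemma expectation_pair_pmf_finite:
  fixes P :: "'a::finite pmf" and f :: "'a \<times> 'c \<Rightarrow> real"
  assumes "finite (set_pmf Q)"
  shows "measure_pmf.expectation (pair_pmf P Q) f
       = (\<Sum>x\<in>UNIV. pmf P x * measure_pmf.expectation Q (\<lambda>y. f (x, y)))"
proof -
  have "measure_pmf.expectation (pair_pmf P Q) f = (\<Sum>z\<in>UNIV \<times> set_pmf Q. f z * pmf (pair_pmf P Q) z)"
    by (rule integral_measure_pmf_real) (use assms in auto)
  also have "\<dots> = (\<Sum>x\<in>UNIV. \<Sum>y\<in>set_pmf Q. f (x, y) * pmf (pair_pmf P Q) (x, y))"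
    by (simp add: sum.cartesian_product case_prod_beta)
  also have "\<dots> = (\<Sum>x\<in>UNIV. pmf P x * (\<Sum>y\<in>set_pmf Q. f (x, y) * pmf Q y))"
    by (simp add: pmf_pair sum_distrib_left mult_ac)
  also have "\<dots> = (\<Sum>x\<in>UNIV. pmf P x * measure_pmf.expectation Q (\<lambda>y. f (x, y)))"
    using assms by (simp add: integral_measure_pmf_real[where A="set_pmf Q"])
  finally show ?thesis .
qed

lemma expectation_Min_distortion:
  fixes P :: "'a::finite pmf" and Q :: "'b::finite pmf" and d :: "'a \<Rightarrow> 'b \<Rightarrow> real"
  assumes "0 < M"
  defines "a x y \<equiv> measure_pmf.prob Q {y'. d x y' < d x y}"
    and "q x y \<equiv> measure_pmf.prob Q {y'. d x y' = d x y}"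
  shows "measure_pmf.expectation (pair_pmf P (Pi_pmf {..<M} dflt (\<lambda>_. Q)))
           (\<lambda>(x, ys). Min ((\<lambda>i. d x (ys i)) ` {..<M}))
       = (\<Sum>x\<in>UNIV. pmf P x * (\<Sum>y\<in>UNIV. pmf Q y *
            (d x y * ((1 - a x y) ^ M - (1 - (a x y + q x y)) ^ M) / q x y)))"
proof -
  have "finite (set_pmf (Pi_pmf {..<M} dflt (\<lambda>_. Q)))"
    by (rule finite_subset[OF set_Pi_pmf_subset']) auto
  moreover have "{..<M} \<noteq> {}"
    using \<open>0 < M\<close> by auto
  ultimately show ?thesis
    by (simp add: expectation_pair_pmf_finite expectation_Pi_pmf_Min_pointwise a_def q_def)
qed

lemma measurable_measure_pmf_pair_measure:
  fixes P :: "'a::countable pmf" and f :: "'a \<times> 'c \<Rightarrow> real"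
  assumes "\<And>x. (\<lambda>z. f (x, z)) \<in> borel_measurable N"
  shows "f \<in> borel_measurable (measure_pmf P \<Otimes>\<^sub>M N)"
proof -
  have "f \<in> borel_measurable (count_space UNIV \<Otimes>\<^sub>M N)"
    using assms by (intro measurable_pair_measure_countable1) auto
  then show ?thesis
    by (subst measurable_cong_sets[OF sets_pair_measure_cong[OF sets_measure_pmf_count_space refl] refl])
qed

lemma integrable_measure_pmf_pair_measure:
  fixes P :: "'a::finite pmf" and f :: "'a \<times> 'c \<Rightarrow> real"
  assumes N: "sigma_finite_measure N" and f: "\<And>x. integrable N (\<lambda>z. f (x, z))"
  shows "integrable (measure_pmf P \<Otimes>\<^sub>M N) f"
proof -
  interpret pair_sigma_finite "measure_pmf P" N
    by (simp add: pair_sigma_finite_def N measure_pmf.sigma_finite_measure_axioms)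
  show ?thesis
    using f by (intro Fubini_integrable measurable_measure_pmf_pair_measure borel_measurable_integrable)
      (auto intro: integrable_measure_pmf_finite)
qed

lemma integral_measure_pmf_pair_measure:
  fixes P :: "'a::finite pmf" and f :: "'a \<times> 'c \<Rightarrow> real"
  assumes N: "sigma_finite_measure N" and f: "\<And>x. integrable N (\<lambda>z. f (x, z))"
  shows "integral\<^sup>L (measure_pmf P \<Otimes>\<^sub>M N) f
       = (\<Sum>x\<in>UNIV. pmf P x * integral\<^sup>L N (\<lambda>z. f (x, z)))"
proof -
  interpret pair_sigma_finite "measure_pmf P" N
    by (simp add: pair_sigma_finite_def N measure_pmf.sigma_finite_measure_axioms)
  have "integral\<^sup>L (measure_pmf P \<Otimes>\<^sub>M N) f = (\<integral>x. (\<integral>z. f (x, z) \<partial>N) \<partial>measure_pmf P)"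
    using integral_fst'[OF integrable_measure_pmf_pair_measure[OF N f]] by simp
  also have "\<dots> = (\<Sum>x\<in>UNIV. (\<integral>z. f (x, z) \<partial>N) * pmf P x)"
    by (rule integral_measure_pmf_real) auto
  finally show ?thesis
    by (simp add: mult.commute)
qed

text \<open>Where \<open>q x y = 0\<close> also \<open>pmf Q y = 0\<close>, so the junk value of the division by \<open>q x y\<close> is
  harmless here and below.\<close>

lemma Dtilde_eq_sum:
  fixes P :: "'a::finite pmf" and Q :: "'b::finite pmf" and d :: "'a \<Rightarrow> 'b \<Rightarrow> real"
  defines "a x y \<equiv> measure_pmf.prob Q {y'. d x y' < d x y}"
    and "q x y \<equiv> measure_pmf.prob Q {y'. d x y' = d x y}"
  shows "Dtilde P d w Q = (\<Sum>x\<in>UNIV. pmf P x *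
           (\<Sum>y\<in>UNIV. pmf Q y * (d x y * max 0 (min 1 ((w - a x y) / q x y))))) / w"
proof -
  let ?U = "uniform_measure lborel {0..1::real}"
  let ?h = "\<lambda>x y u. d x y * (if p_c d Q x y u \<le> w then 1 else 0 :: real)"
  interpret U: prob_space ?U
    by (intro prob_space_uniform_measure) auto
  have h_int: "integrable ?U (?h x y)" for x y
  proof (rule U.integrable_const_bound[where B="\<bar>d x y\<bar>"])
    have "?h x y \<in> borel_measurable lborel"
      unfolding p_c_def by measurable
    then show "?h x y \<in> borel_measurable ?U"
      by (subst measurable_cong_sets[OF sets_uniform_measure refl])
  qed auto
  have QU: "sigma_finite_measure (measure_pmf Q \<Otimes>\<^sub>M ?U)"
    by (intro prob_space_imp_sigma_finite prob_space_pair measure_pmf.prob_space_axioms U.prob_space_axioms)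
  have ramp: "pmf Q y * integral\<^sup>L ?U (?h x y) = pmf Q y * (d x y * max 0 (min 1 ((w - a x y) / q x y)))"
    for x y
  proof (cases "pmf Q y = 0")
    case False
    then have "0 < q x y"
      unfolding q_def by (rule prob_level_set_pos)
    moreover have "p_c d Q x y u = a x y + u * q x y" for u
      by (simp add: p_c_def a_def q_def)
    ultimately show ?thesis
      by (simp add: integral_uniform_indicator_affine_le)
  qed simp
  have inner: "integral\<^sup>L (measure_pmf Q \<Otimes>\<^sub>M ?U) (\<lambda>(y, u). ?h x y u)
      = (\<Sum>y\<in>UNIV. pmf Q y * (d x y * max 0 (min 1 ((w - a x y) / q x y))))" for x
  proof -
    have "integral\<^sup>L (measure_pmf Q \<Otimes>\<^sub>M ?U) (\<lambda>(y, u). ?h x y u)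
        = (\<Sum>y\<in>UNIV. pmf Q y * integral\<^sup>L ?U (?h x y))"
      by (subst integral_measure_pmf_pair_measure[OF U.sigma_finite_measure_axioms]) (simp_all only: prod.case h_int)
    then show ?thesis
      by (simp only: ramp)
  qed
  have "integral\<^sup>L (measure_pmf P \<Otimes>\<^sub>M (measure_pmf Q \<Otimes>\<^sub>M ?U)) (\<lambda>(x, y, u). ?h x y u)
      = (\<Sum>x\<in>UNIV. pmf P x * integral\<^sup>L (measure_pmf Q \<Otimes>\<^sub>M ?U) (\<lambda>(y, u). ?h x y u))"
    by (subst integral_measure_pmf_pair_measure[OF QU])
      (auto intro!: integrable_measure_pmf_pair_measure U.sigma_finite_measure_axioms h_int)
  then show ?thesis
    unfolding Dtilde_def inner by simp
qed

lemma interval_integral_Dtilde_deriv_G: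
  fixes P :: "'a::finite pmf" and Q :: "'b::finite pmf" and d :: "'a \<Rightarrow> 'b \<Rightarrow> real"
  defines "a x y \<equiv> measure_pmf.prob Q {y'. d x y' < d x y}"
    and "q x y \<equiv> measure_pmf.prob Q {y'. d x y' = d x y}"
  shows "(LBINT w=0..1. Dtilde P d w Q * deriv (G (n + 2)) w)
       = (\<Sum>x\<in>UNIV. pmf P x * (\<Sum>y\<in>UNIV. pmf Q y *
            (d x y * ((1 - a x y) ^ (n + 2) - (1 - (a x y + q x y)) ^ (n + 2)) / q x y)))"
    (is "_ = ?V")
proof -
  define g where "g w = (\<Sum>x\<in>UNIV. \<Sum>y\<in>UNIV. pmf P x * pmf Q y * d x y *
      (max 0 (min 1 ((w - a x y) / q x y)) * (real (n + 2) * real (n + 1) * (1 - w) ^ n)))" for w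
  have integrand: "Dtilde P d w Q * deriv (G (n + 2)) w = g w" if "0 < w" for w
  proof -
    have "Dtilde P d w Q * deriv (G (n + 2)) w
        = (\<Sum>x\<in>UNIV. pmf P x * (\<Sum>y\<in>UNIV. pmf Q y * (d x y * max 0 (min 1 ((w - a x y) / q x y)))))
          * (real (n + 2) * real (n + 1) * (1 - w) ^ n)"
      using that unfolding Dtilde_eq_sum deriv_G a_def q_def by simp
    also have "\<dots> = g w"
      unfolding g_def sum_distrib_left sum_distrib_right by (simp add: mult_ac)
    finally show ?thesis .
  qed
  have g_integral: "(g has_integral ?V) {0..1}"
    unfolding g_def sum_distrib_left
  proof (intro has_integral_sum ballI finite)
    fix x y
    show "((\<lambda>w. pmf P x * pmf Q y * d x y *
        (max 0 (min 1 ((w - a x y) / q x y)) * (real (n + 2) * real (n + 1) * (1 - w) ^ n)))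
        has_integral pmf P x * (pmf Q y *
          (d x y * ((1 - a x y) ^ (n + 2) - (1 - (a x y + q x y)) ^ (n + 2)) / q x y))) {0..1}"
    proof (cases "pmf Q y = 0")
      case False
      then have "0 < q x y"
        unfolding q_def by (rule prob_level_set_pos)
      moreover have "a x y + q x y \<le> 1"
        unfolding a_def q_def prob_level_le_eq[symmetric] by simp
      moreover have "0 \<le> a x y"
        unfolding a_def by simp
      ultimately show ?thesis
        using has_integral_mult_right[OF has_integral_ramp_times_power[of "q x y" "a x y" n],
            where c="pmf P x * pmf Q y * d x y"]
        by (simp only: mult.assoc times_divide_eq_right)
    qed simp
  qed
  have "continuous_on {0..1} g"
    unfolding g_def divide_inverse by (intro continuous_intros)
  have "(LBINT w=0..1. Dtilde P d w Q * deriv (G (n + 2)) w) = (LBINT w=0..1. g w)"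
    by (rule interval_integral_cong, rule integrand) (simp add: einterval_def)
  also have "\<dots> = integral {0..1} g"
    using interval_integral_eq_integral[of 0 1 g, OF _ borel_integrable_atLeastAtMost']
      \<open>continuous_on {0..1} g\<close>
    by (simp add: zero_ereal_def one_ereal_def)
  also have "\<dots> = ?V"
    using g_integral by (rule integral_unique)
  finally show ?thesis .
qed

theorem theorem1:
  fixes P :: "'a::finite pmf" and Q :: "'b::finite pmf"
    and d :: "'a \<Rightarrow> 'b \<Rightarrow> real" and R :: real and M :: nat
  assumes d_nonneg: "\<And>x y. d x y \<ge> 0"
    and R_nonneg: "R \<ge> 0"
    and R_int: "exp R \<in> \<int>"
    and M_def: "real M = exp R + 1"
  shows "measure_pmf.expectation (pair_pmf P (Pi_pmf {..<M} undefined (\<lambda>_. Q)))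
           (\<lambda>(x, ys). Min ((\<lambda>i. d x (ys i)) ` {..<M}))
         = (LBINT w=0..1. Dtilde P d w Q * deriv (G M) w)"
proof -
  have "1 \<le> exp R"
    using R_nonneg by simp
  then have "2 \<le> M"
    using M_def by linarith
  then obtain n where n: "M = n + 2"
    using le_Suc_ex[OF \<open>2 \<le> M\<close>] by (auto simp: add.commute)
  have M_pos: "0 < n + 2"
    by simp
  show ?thesis
    unfolding n expectation_Min_distortion[OF M_pos] interval_integral_Dtilde_deriv_G ..
qed

end
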